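(* Let $N$ and $\tilde{N}$ be real symmetric matrices and $\epsilon\ge0$. If $I-\tilde{N}\approx_{\epsilon}I-N$ and $N$ is positive semidefinite, then $I+\tilde{N}\approx_{\epsilon}I+N$.
   Context: For real symmetric $X,Y$ and $\epsilon\ge0$, $X\approx_\epsilon Y$ means $(1-\epsilon)v^TYv\le v^TXv\le(1+\epsilon)v^TYv$ for all vectors $v$. *)

theory Defs
  imports "HOL-Analysis.Analysis"
begin

definition spec_approx :: "real^'n^'n \<Rightarrow> real \<Rightarrow> real^'n^'n \<Rightarrow> bool" where
  "spec_approx X eps Y \<longleftrightarrow>
     (\<forall>v::real^'n. (1 - eps) * (v \<bullet> (Y *v v)) \<le> v \<bullet> (X *v v)
                 \<and> v \<bullet> (X *v v) \<le> (1 + eps) * (v \<bullet> (Y *v v)))"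

definition psd :: "real^'n^'n \<Rightarrow> bool" where
  "psd A \<longleftrightarrow> (\<forall>v::real^'n. 0 \<le> v \<bullet> (A *v v))"

end

theory Submission
  imports Defs
begin

text \<open>Write \<open>a = v\<^sup>T v\<close>, \<open>b = v\<^sup>T N v\<close> and \<open>c = v\<^sup>T \<tilde>N v\<close>. The hypothesis bounds \<open>a - c\<close>
  between \<open>(1 \<mp> \<epsilon>)(a - b)\<close>; solving for \<open>c\<close> and using \<open>\<epsilon> b \<ge> 0\<close> bounds \<open>a + c\<close>
  between \<open>(1 \<mp> \<epsilon>)(a + b)\<close>. The argument is pointwise in \<open>v\<close>.\<close>

lemma quadratic_form_mat1_add:
  fixes A :: "real^'n^'n"
  shows "v \<bullet> ((mat 1 + A) *v v) = v \<bullet> v + v \<bullet> (A *v v)"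
  by (simp add: matrix_vector_mult_add_rdistrib inner_add_right)

lemma quadratic_form_mat1_diff:
  fixes A :: "real^'n^'n"
  shows "v \<bullet> ((mat 1 - A) *v v) = v \<bullet> v - v \<bullet> (A *v v)"
  by (simp add: matrix_vector_mult_diff_rdistrib inner_diff_right)

lemma approx_shift_sign:
  fixes a b c eps :: real
  assumes "0 \<le> eps" and "0 \<le> b"
    and lower: "(1 - eps) * (a - b) \<le> a - c"
    and upper: "a - c \<le> (1 + eps) * (a - b)"
  shows "(1 - eps) * (a + b) \<le> a + c \<and> a + c \<le> (1 + eps) * (a + b)"
proof -
  have "0 \<le> eps * b" using assms(1,2) by simp
  moreover have "c \<ge> (1 + eps) * b - eps * a" using upper by (simp add: algebra_simps)
  moreover have "c \<le> (1 - eps) * b + eps * a" using lower by (simp add: algebra_simps)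
  ultimately show ?thesis by (simp add: algebra_simps)
qed

lemma spec_approx_mat1_add_of_diff:
  fixes N Nt :: "real^'n^'n"
  assumes "0 \<le> eps" and "spec_approx (mat 1 - Nt) eps (mat 1 - N)" and "psd N"
  shows "spec_approx (mat 1 + Nt) eps (mat 1 + N)"
  unfolding spec_approx_def quadratic_form_mat1_add
proof
  fix v :: "real^'n"
  have "(1 - eps) * (v \<bullet> v - v \<bullet> (N *v v)) \<le> v \<bullet> v - v \<bullet> (Nt *v v)"
    and "v \<bullet> v - v \<bullet> (Nt *v v) \<le> (1 + eps) * (v \<bullet> v - v \<bullet> (N *v v))"
    using assms(2) by (auto simp: spec_approx_def quadratic_form_mat1_diff)
  moreover have "0 \<le> v \<bullet> (N *v v)"
    using assms(3) by (simp add: psd_def)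
  ultimately show "(1 - eps) * (v \<bullet> v + v \<bullet> (N *v v)) \<le> v \<bullet> v + v \<bullet> (Nt *v v)
      \<and> v \<bullet> v + v \<bullet> (Nt *v v) \<le> (1 + eps) * (v \<bullet> v + v \<bullet> (N *v v))"
    using approx_shift_sign assms(1) by blast
qed

theorem claim1:
  fixes N Nt :: "real^'n^'n" and eps :: real
  assumes "transpose N = N" and "transpose Nt = Nt" and "eps \<ge> 0"
    and "spec_approx (mat 1 - Nt) eps (mat 1 - N)"
    and "psd N"
  shows "spec_approx (mat 1 + Nt) eps (mat 1 + N)"
  using assms(3-5) by (rule spec_approx_mat1_add_of_diff)

end
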